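(* In the model and protocol $\mathrm{OciorABA}^*$ described in the context, let $j\in[1:n]$ be such that $\mathrm{ABBA}_j$ delivers output $1$ at some honest node. Then there is a value $y^{(j)}_j$ that $\mathrm{RBC}_j$ eventually delivers at every honest node, and there exists an honest node $\mathrm{Node}_i$, $i\in[1:n]\setminus\mathcal F$, whose input message $w_i$ satisfies $\mathrm{Enc}_j(w_i)=y^{(j)}_j$.
   Context: Model: there are $n$ nodes $\mathrm{Node}_1,\dots,\mathrm{Node}_n$ in an asynchronous network (every message sent between honest nodes is eventually delivered, with arbitrary adversarial delay). An adaptive adversary may corrupt (make dishonest/Byzantine) at most $t$ nodes in total; $\mathcal F\subseteq[1:n]$ denotes the set of dishonest nodes; $n\ge 3t+1$. Primitives used as black boxes: (RBC) For each $j\in[1:n]$ there is a reliable broadcast instance $\mathrm{RBC}_j$ with leader $\mathrm{Node}_j$, satisfying: Consistency (if two honest nodes output $w',w''$ then $w'=w''$); Validity (if the leader is honest and inputs $w$, every honest node eventually outputs $w$); Totality (if one honest node outputs a value, every honest node eventually outputs a value). (ABBA) For each $j\in[1:n]$ there is a binary Byzantine agreement instance $\mathrm{ABBA}_j$ (inputs and outputs in $\{0,1\}$), satisfying: Termination (if all honest nodes provide inputs, every honest node eventually outputs a value and terminates); Consistency (if an honest node outputs $b$, every honest node eventually outputs $b$); Validity (if all honest nodes input the same $b$, every honest node eventually outputs $b$). (Erasure code) An $(n,t+1)$ erasure code over an alphabet $\Sigma$: an encoder $\mathrm{Enc}$ mapping a message $w$ to $(\mathrm{Enc}_1(w),\dots,\mathrm{Enc}_n(w))\in\Sigma^n$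 and a decoder $\mathrm{Dec}$ such that for every set $K\subseteq[1:n]$ with $|K|=t+1$, $\mathrm{Dec}(\{\mathrm{Enc}_j(w)\}_{j\in K})=w$. Protocol $\mathrm{OciorABA}^*$, code for an honest $\mathrm{Node}_i$ with input message $w_i$: (1) Compute $(y^{(i)}_1,\dots,y^{(i)}_n)=\mathrm{Enc}(w_i)$ and input $y^{(i)}_i$ into $\mathrm{RBC}_i$ (as leader). (2) Upon delivery of a value $y^{(j)}_j$ from $\mathrm{RBC}_j$ (after step (1) has been executed), if $\mathrm{Node}_i$ has not yet given an input to $\mathrm{ABBA}_j$: set $a_i[j]=1$ if $y^{(j)}_j=y^{(i)}_j$ and $a_i[j]=0$ otherwise, and input $a_i[j]$ into $\mathrm{ABBA}_j$. (3) Upon obtaining outputs from $n-t$ of the instances $\mathrm{ABBA}_1,\dots,\mathrm{ABBA}_n$, input $0$ into every $\mathrm{ABBA}_j$ to which $\mathrm{Node}_i$ has not yet given an input. (4) Upon obtaining outputs from all $n$ ABBA instances: let $S=\{j:\mathrm{ABBA}_j\text{ output }1\}$. If $|S|<t+1$, output a default value $\bot$ and terminate. Otherwise let $K$ be the set of the $t+1$ smallest elements of $S$, wait for delivery of $y^{(j)}_j$ from $\mathrm{RBC}_j$ for all $j\in K$, output $\mathrm{Dec}(\{y^{(j)}_j\}_{j\in K})$ and terminate. *)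

theory Defs
  imports Main
begin

text \<open>
Nodes are 1..n, time is discrete (nat),
and "eventually" means "at some finite time".  An execution is described by
  rbc_lin j          : the value the leader Node_j inputs into RBC_j (None = no input)
  rbc_del j i        : Some (tau, v) iff RBC_j delivers v at Node_i at time tau
  abba_inp j i       : Some (tau, b) iff Node_i inputs b into ABBA_j at time tau
  abba_out j i       : Some (tau, b) iff ABBA_j outputs b at Node_i at time tau
Each instance delivers / accepts at most one value per node.  Only honest
nodes (those in {1..n} - F) are constrained.
\<close>

definition honest :: "nat \<Rightarrow> nat set \<Rightarrow> nat set" where
  "honest n F = {1..n} - F"

text \<open>(n, t+1) erasure code: Enc_k(w) = enc w k.\<close>
definition erasure_code ::
  "nat \<Rightarrow> nat \<Rightarrow> ('m \<Rightarrow> nat \<Rightarrow> 's) \<Rightarrow> ((nat \<times> 's) set \<Rightarrow> 'm) \<Rightarrow> bool" where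
  "erasure_code n t enc dec \<longleftrightarrow>
     (\<forall>w K. K \<subseteq> {1..n} \<and> card K = t + 1 \<longrightarrow> dec ((\<lambda>k. (k, enc w k)) ` K) = w)"

definition rbc_props ::
  "nat \<Rightarrow> nat set \<Rightarrow> nat \<Rightarrow> ('v option) \<Rightarrow> (nat \<Rightarrow> (nat \<times> 'v) option) \<Rightarrow> bool" where
  "rbc_props n F j lin del \<longleftrightarrow>
     (\<forall>i\<in>honest n F. \<forall>i'\<in>honest n F. \<forall>\<tau> \<tau>' v v'.
        del i = Some (\<tau>, v) \<and> del i' = Some (\<tau>', v') \<longrightarrow> v = v') \<and>
     (\<forall>y. j \<in> honest n F \<and> lin = Some y \<longrightarrow>
        (\<forall>i\<in>honest n F. \<exists>\<tau>. del i = Some (\<tau>, y))) \<and>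
     ((\<exists>i\<in>honest n F. del i \<noteq> None) \<longrightarrow> (\<forall>i\<in>honest n F. del i \<noteq> None))"

definition abba_props ::
  "nat \<Rightarrow> nat set \<Rightarrow> (nat \<Rightarrow> (nat \<times> bool) option) \<Rightarrow> (nat \<Rightarrow> (nat \<times> bool) option) \<Rightarrow> bool" where
  "abba_props n F inp out \<longleftrightarrow>
     ((\<forall>i\<in>honest n F. inp i \<noteq> None) \<longrightarrow> (\<forall>i\<in>honest n F. out i \<noteq> None)) \<and>
     (\<forall>i\<in>honest n F. \<forall>\<tau> b. out i = Some (\<tau>, b) \<longrightarrow>
        (\<forall>i'\<in>honest n F. \<exists>\<tau>'. out i' = Some (\<tau>', b))) \<and>
     (\<forall>b. (\<forall>i\<in>honest n F. \<exists>\<tau>. inp i = Some (\<tau>, b)) \<longrightarrow>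
        (\<forall>i\<in>honest n F. \<exists>\<tau>. out i = Some (\<tau>, b)))"

definition outs_by ::
  "nat \<Rightarrow> (nat \<Rightarrow> nat \<Rightarrow> (nat \<times> bool) option) \<Rightarrow> nat \<Rightarrow> nat \<Rightarrow> nat" where
  "outs_by n abba_out i \<tau> = card {k \<in> {1..n}. \<exists>\<tau>k bk. abba_out k i = Some (\<tau>k, bk) \<and> \<tau>k \<le> \<tau>}"

text \<open>Code of OciorABA* (steps (1)-(3)) for an honest Node_i with input w_i.
  Step (4) only produces the node's final output and does not affect RBC/ABBA.\<close>
definition honest_steps ::
  "nat \<Rightarrow> nat \<Rightarrow> nat \<Rightarrow> 'm \<Rightarrow> ('m \<Rightarrow> nat \<Rightarrow> 'v) \<Rightarrow> (nat \<Rightarrow> 'v option)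
   \<Rightarrow> (nat \<Rightarrow> nat \<Rightarrow> (nat \<times> 'v) option)
   \<Rightarrow> (nat \<Rightarrow> nat \<Rightarrow> (nat \<times> bool) option)
   \<Rightarrow> (nat \<Rightarrow> nat \<Rightarrow> (nat \<times> bool) option) \<Rightarrow> bool" where
  "honest_steps n t i wi enc rbc_lin rbc_del abba_inp abba_out \<longleftrightarrow>
     rbc_lin i = Some (enc wi i) \<and>
     (\<forall>j\<in>{1..n}. \<forall>\<tau> v. rbc_del j i = Some (\<tau>, v) \<longrightarrow>
        (\<exists>\<tau>' b. abba_inp j i = Some (\<tau>', b) \<and> \<tau>' \<le> \<tau>)) \<and>
     (\<forall>\<tau>. n - t \<le> outs_by n abba_out i \<tau> \<longrightarrow>
        (\<forall>j\<in>{1..n}. \<exists>\<tau>' b. abba_inp j i = Some (\<tau>', b) \<and> \<tau>' \<le> \<tau>)) \<and>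
     (\<forall>j\<in>{1..n}. \<forall>\<tau> b. abba_inp j i = Some (\<tau>, b) \<longrightarrow>
        ((\<exists>v. rbc_del j i = Some (\<tau>, v) \<and> b = (v = enc wi j)) \<or>
         (\<not> b \<and> n - t \<le> outs_by n abba_out i \<tau>)))"

end

theory Submission
  imports Defs
begin

text \<open>Every honest leader's RBC delivers at every honest node and thereby triggers an input
  into its ABBA there, so the at least n - t ABBA instances with honest leaders terminate.
  Hence step (3) eventually fires at every honest node, and every honest node inputs into
  every ABBA. If ABBA_j outputs 1, validity rules out that all honest inputs were 0, so some
  honest node input 1, which by step (2) it did only after RBC_j delivered Enc_j of its own
  message. Consistency and totality of RBC_j spread this value to all honest nodes.\<close>

lemma finite_honest: "finite (honest n F)"
  by (simp add: honest_def)

lemma honest_subset: "honest n F \<subseteq> {1..n}"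
  by (auto simp: honest_def)

lemma card_honest:
  assumes "F \<subseteq> {1..n}"
  shows "card (honest n F) = n - card F"
  unfolding honest_def using assms by (simp add: card_Diff_subset finite_subset)

lemma rbc_props_consistent:
  assumes "rbc_props n F j lin del" "i \<in> honest n F" "i' \<in> honest n F"
    "del i = Some (\<tau>, v)" "del i' = Some (\<tau>', v')"
  shows "v = v'"
  using assms unfolding rbc_props_def by blast

lemma rbc_props_total:
  assumes "rbc_props n F j lin del" "i \<in> honest n F" "del i \<noteq> None" "i' \<in> honest n F"
  shows "del i' \<noteq> None"
  using assms unfolding rbc_props_def by blast

lemma rbc_props_valid:
  assumes "rbc_props n F j lin del" "j \<in> honest n F" "lin = Some y" "i \<in> honest n F"
  shows "\<exists>\<tau>. del i = Some (\<tau>, y)"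
  using assms unfolding rbc_props_def by blast

lemma rbc_delivers_everywhere:
  assumes "rbc_props n F j lin del"
    and "i \<in> honest n F" and "del i = Some (\<tau>, v)"
  shows "\<forall>i'\<in>honest n F. \<exists>\<tau>'. del i' = Some (\<tau>', v)"
proof
  fix i' assume i': "i' \<in> honest n F"
  then obtain \<tau>' v' where d': "del i' = Some (\<tau>', v')"
    using rbc_props_total[OF assms(1,2)] assms(3) by fastforce
  have "v' = v" by (rule rbc_props_consistent[OF assms(1) i' assms(2) d' assms(3)])
  then show "\<exists>\<tau>'. del i' = Some (\<tau>', v)" using d' by blast
qed

lemma abba_props_terminates:
  assumes "abba_props n F inp out" "\<forall>i\<in>honest n F. inp i \<noteq> None" "i \<in> honest n F"
  shows "out i \<noteq> None"
  using assms unfolding abba_props_def by blast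

lemma abba_props_valid:
  assumes "abba_props n F inp out" "\<forall>i\<in>honest n F. \<exists>\<tau>. inp i = Some (\<tau>, b)" "i \<in> honest n F"
  shows "\<exists>\<tau>. out i = Some (\<tau>, b)"
  using assms unfolding abba_props_def by blast

lemma abba_validity_one:
  assumes "abba_props n F inp out"
    and "\<forall>i\<in>honest n F. inp i \<noteq> None"
    and "i0 \<in> honest n F" and "out i0 = Some (\<tau>0, True)"
  shows "\<exists>i\<in>honest n F. \<exists>\<tau>. inp i = Some (\<tau>, True)"
proof (rule ccontr)
  assume "\<not> ?thesis"
  then have "\<forall>i\<in>honest n F. \<exists>\<tau>. inp i = Some (\<tau>, False)" using assms(2) by fastforce
  then obtain \<tau> where "out i0 = Some (\<tau>, False)" using abba_props_valid[OF assms(1)] assms(3) by blast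
  then show False using assms(4) by simp
qed

lemma honest_steps_leader_input:
  "honest_steps n t i wi enc rbc_lin rbc_del abba_inp abba_out \<Longrightarrow> rbc_lin i = Some (enc wi i)"
  by (simp add: honest_steps_def)

lemma honest_steps_input_after_delivery:
  assumes "honest_steps n t i wi enc rbc_lin rbc_del abba_inp abba_out"
    and "j \<in> {1..n}" and "rbc_del j i = Some (\<tau>, v)"
  shows "abba_inp j i \<noteq> None"
  using assms unfolding honest_steps_def by blast

lemma honest_steps_input_after_quorum:
  assumes "honest_steps n t i wi enc rbc_lin rbc_del abba_inp abba_out"
    and "n - t \<le> outs_by n abba_out i \<tau>" and "j \<in> {1..n}"
  shows "abba_inp j i \<noteq> None"
  using assms unfolding honest_steps_def by blast

lemma honest_steps_input_one:
  assumes "honest_steps n t i wi enc rbc_lin rbc_del abba_inp abba_out"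
    and "j \<in> {1..n}" and "abba_inp j i = Some (\<tau>, True)"
  shows "rbc_del j i = Some (\<tau>, enc wi j)"
  using assms unfolding honest_steps_def by blast

lemma outs_by_ge_card:
  assumes "finite A" and "A \<subseteq> {1..n}" and "\<forall>k\<in>A. abba_out k i \<noteq> None"
  shows "\<exists>M. card A \<le> outs_by n abba_out i M"
proof
  define M where "M = Max ((\<lambda>k. fst (the (abba_out k i))) ` A)"
  have "A \<subseteq> {k \<in> {1..n}. \<exists>\<tau>k bk. abba_out k i = Some (\<tau>k, bk) \<and> \<tau>k \<le> M}"
  proof
    fix k assume k: "k \<in> A"
    then obtain \<tau>k bk where e: "abba_out k i = Some (\<tau>k, bk)" using assms(3) by fastforce
    have "fst (the (abba_out k i)) \<le> M" unfolding M_def using assms(1) k by simp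
    then show "k \<in> {k \<in> {1..n}. \<exists>\<tau>k bk. abba_out k i = Some (\<tau>k, bk) \<and> \<tau>k \<le> M}"
      using e k assms(2) by auto
  qed
  then show "card A \<le> outs_by n abba_out i M"
    unfolding outs_by_def by (rule card_mono[rotated]) simp
qed

lemma abba_terminates_for_honest_leader:
  assumes k: "k \<in> honest n F"
    and rbc: "rbc_props n F k (rbc_lin k) (rbc_del k)"
    and abba: "abba_props n F (abba_inp k) (abba_out k)"
    and proto: "\<forall>i\<in>honest n F. honest_steps n t i (w i) enc rbc_lin rbc_del abba_inp abba_out"
  shows "\<forall>i\<in>honest n F. abba_out k i \<noteq> None"
proof -
  have "rbc_lin k = Some (enc (w k) k)" by (rule honest_steps_leader_input[OF proto[rule_format, OF k]])
  then have del: "\<exists>\<tau>. rbc_del k i = Some (\<tau>, enc (w k) k)" if "i \<in> honest n F" for i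
    by (rule rbc_props_valid[OF rbc k _ that])
  then have "abba_inp k i \<noteq> None" if i: "i \<in> honest n F" for i
  proof -
    obtain \<tau> where "rbc_del k i = Some (\<tau>, enc (w k) k)" using del i by blast
    then show ?thesis
      using honest_steps_input_after_delivery[OF proto[rule_format, OF i]] k honest_subset by blast
  qed
  then show ?thesis using abba_props_terminates[OF abba] by blast
qed

lemma honest_nodes_input_every_abba:
  assumes F_sub: "F \<subseteq> {1..n}" and F_card: "card F \<le> t"
    and rbc: "\<forall>k\<in>{1..n}. rbc_props n F k (rbc_lin k) (\<lambda>i. rbc_del k i)"
    and abba: "\<forall>k\<in>{1..n}. abba_props n F (\<lambda>i. abba_inp k i) (\<lambda>i. abba_out k i)"
    and proto: "\<forall>i\<in>honest n F. honest_steps n t i (w i) enc rbc_lin rbc_del abba_inp abba_out"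
    and j: "j \<in> {1..n}" and i: "i \<in> honest n F"
  shows "abba_inp j i \<noteq> None"
proof -
  have "abba_out k i \<noteq> None" if k: "k \<in> honest n F" for k
  proof -
    have "k \<in> {1..n}" using k honest_subset by blast
    then show ?thesis
      using abba_terminates_for_honest_leader[OF k _ _ proto] rbc abba i by simp
  qed
  then obtain M where "card (honest n F) \<le> outs_by n abba_out i M"
    using outs_by_ge_card[OF finite_honest honest_subset] by blast
  moreover have "n - t \<le> card (honest n F)" using card_honest[OF F_sub] F_card by simp
  ultimately have "n - t \<le> outs_by n abba_out i M" by simp
  then show ?thesis by (rule honest_steps_input_after_quorum[OF proto[rule_format, OF i] _ j])
qed

theorem lemma2:
  fixes n t :: nat and F :: "nat set"
    and w :: "nat \<Rightarrow> 'm"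
    and enc :: "'m \<Rightarrow> nat \<Rightarrow> 'v" and dec :: "(nat \<times> 'v) set \<Rightarrow> 'm"
    and rbc_lin :: "nat \<Rightarrow> 'v option"
    and rbc_del :: "nat \<Rightarrow> nat \<Rightarrow> (nat \<times> 'v) option"
    and abba_inp abba_out :: "nat \<Rightarrow> nat \<Rightarrow> (nat \<times> bool) option"
    and j i0 \<tau>0 :: nat
  assumes n_ge: "n \<ge> 3 * t + 1"
    and F_sub: "F \<subseteq> {1..n}" and F_card: "card F \<le> t"
    and code: "erasure_code n t enc dec"
    and rbc: "\<forall>k\<in>{1..n}. rbc_props n F k (rbc_lin k) (\<lambda>i. rbc_del k i)"
    and abba: "\<forall>k\<in>{1..n}. abba_props n F (\<lambda>i. abba_inp k i) (\<lambda>i. abba_out k i)"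
    and proto: "\<forall>i\<in>honest n F. honest_steps n t i (w i) enc rbc_lin rbc_del abba_inp abba_out"
    and j_range: "j \<in> {1..n}"
    and out1: "i0 \<in> honest n F" "abba_out j i0 = Some (\<tau>0, True)"
  shows "\<exists>y. (\<forall>i\<in>honest n F. \<exists>\<tau>. rbc_del j i = Some (\<tau>, y)) \<and>
             (\<exists>i\<in>honest n F. enc (w i) j = y)"
proof -
  have rbc_j: "rbc_props n F j (rbc_lin j) (rbc_del j)" using rbc j_range by simp
  have abba_j: "abba_props n F (abba_inp j) (abba_out j)" using abba j_range by simp
  have "\<forall>i\<in>honest n F. abba_inp j i \<noteq> None"
    using honest_nodes_input_every_abba[OF F_sub F_card rbc abba proto j_range] by blast
  then obtain i \<tau> where i: "i \<in> honest n F" and inp: "abba_inp j i = Some (\<tau>, True)"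
    using abba_validity_one[OF abba_j _ out1] by blast
  have "rbc_del j i = Some (\<tau>, enc (w i) j)"
    by (rule honest_steps_input_one[OF proto[rule_format, OF i] j_range inp])
  then have "\<forall>i'\<in>honest n F. \<exists>\<tau>'. rbc_del j i' = Some (\<tau>', enc (w i) j)"
    by (rule rbc_delivers_everywhere[OF rbc_j i])
  then show ?thesis using i by blast
qed

end
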